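(* Let $X$ be a vertex-weighted simplicial complex on $n$ vertices, fix $k$, and let $U^{h}$ be a $\Pi^\pm_k$-projected $(1,\alpha,0)$-unitary encoding of $\Pi^\pm_kP\Pi^\pm_k$, i.e. $(\Pi^\pm_k\otimes\langle0^\alpha|)U^{h}(\Pi^\pm_k\otimes|0^\alpha\rangle)=\Pi^\pm_kP\Pi^\pm_k$. Let $V^{h}=((I_n\otimes HZ\otimes I)\otimes I_\alpha)U^{h}$, where $HZ$ (product of Hadamard and Pauli-$Z$) acts on qubit $n+1$. Then $(\Pi_k\otimes\langle0^\alpha|)V^{h}(\Pi_k\otimes|0^\alpha\rangle)=\frac{\Delta_k}{K\sqrt2}$.
   Context: Vertices $V=\{1,\dots,n\}$ with weights $w:V\to(0,\infty)$. $X$ is a family of nonempty subsets of $V$ closed under nonempty subsets; $X_k$ = $k$-simplices (size $k+1$), identified with Hamming-weight-$(k+1)$ strings $x_\sigma\in\{0,1\}^n$. Oriented $k$-simplex: ordering $[v_0,\dots,v_k]$ up to even permutations, positive if an even permutation of the increasing order. $X^\pm_k=X^+_k\cup X^-_k$, $\overline\sigma$ opposite orientation, $\sigma_+$ the positive one of $\sigma,\overline\sigma$. $[v_0,\dots,v_k]$ induces on the face missing $v_j$ the orientation $(-1)^j[v_0,..,\widehat{v_j},..,v_k]$ and on a coface $\sigma\cup\{u\}$ the orientation $[u,v_0,\dots,v_k]$. For oriented $\sigma,\sigma'$ with distinct underlying simplices, $\sigma\sim_\downarrow\sigma'$ if they share a $(k-1)$-face and induce the same orientation on it; $\sigma\sim_\uparrow\sigma'$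 if their union is a $(k+1)$-simplex of $X$ on which they induce the same orientation; $\nsim_\uparrow$ is its negation; $v_\sigma$ ($v_{\sigma'}$) is the vertex of $\sigma$ not in $\sigma'$ (vice versa); $\mathrm{up}(\sigma)=\{u:\sigma\cup\{u\}\in X_{k+1}\}$. $\Delta_k$ is the matrix indexed by $X^+_k$ with $(\Delta_k)_{\sigma\sigma}=\sum_{u\in\mathrm{up}(\sigma)}w(u)^2+\sum_{v\in\sigma}w(v)^2$, $(\Delta_k)_{\sigma\sigma'}=w(v_\sigma)w(v_{\sigma'})$ if $\sigma\sim_\downarrow\sigma'$ and $\sigma\nsim_\uparrow\overline{\sigma'}$, $-w(v_\sigma)w(v_{\sigma'})$ if $\sigma\sim_\downarrow\overline{\sigma'}$ and $\sigma\nsim_\uparrow\sigma'$, $0$ otherwise. $\Theta$ is an absorbing state, $S_k=X^\pm_k\cup\{\Theta\}$; $|\sigma\rangle$ is the $(n+2)$-qubit state $|x_\sigma\rangle|00\rangle$ ($\sigma\in X^+_k$), $|x_\sigma\rangle|10\rangle$ ($\sigma\in X^-_k$), $|0^n\rangle|01\rangle$ ($\Theta$). $\Pi_k$, $\Pi^\pm_k$ project onto $\mathrm{span}\{|\sigma\rangle\}$ over $X^+_k$, $X^\pm_k$; matrices indexed by $X^+_k$ or $S_k$ act on these spans in this basis and as $0$ elsewhere. $U$ is a $\Pi_s$-projected $(a,\alpha,\epsilon)$-unitary encoding of $A$ if $\|A-a(\Pi_s\otimes\langle0^\alpha|)U(\Pi_s\otimes|0^\alpha\rangle)\|\le\epsilon$.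 For $\sigma\in X^\pm_k$: $i(\sigma)$ = position of the $i$-th $0$ of $x_\sigma$, $\tilde j(\sigma)$ = position of its $j$-th $1$. $K=\max_{\sigma\in X^\pm_k}\big(\sum_{i\in[n]}w(i)^2+\sum_{i\in[n-k-1],j\in[k+1]}w(i(\sigma))w(\tilde j(\sigma))\big)$; $\eta_\sigma=1-\frac1K\sum_{\sigma'\in X^+_k}|(\Delta_k)_{\sigma'\sigma_+}|$. $P$ on $S_k$: for $\sigma,\sigma'\in X^\pm_k$, $P_{\sigma\sigma}=(\sum_{u\in\mathrm{up}(\sigma)}w(u)^2+\sum_{v\in\sigma}w(v)^2)/K$, $P_{\sigma\sigma'}=w(v_\sigma)w(v_{\sigma'})/K$ if $\sigma\sim_\downarrow\sigma'$ and $\sigma\nsim_\uparrow\overline{\sigma'}$, $P_{\sigma\Theta}=\eta_\sigma$, $P_{\Theta\Theta}=1$, all other entries $0$. *)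

theory Defs
  imports "HOL-Analysis.Analysis"
begin

text \<open>An oriented simplex is represented as a pair (s, b): b = True is the
positive orientation (the class of the increasing ordering), b = False
the opposite one.\<close>

type_synonym osimplex = "nat set \<times> bool"

definition is_complex :: "nat \<Rightarrow> nat set set \<Rightarrow> bool" where
  "is_complex n X \<longleftrightarrow> (\<forall>s\<in>X. s \<noteq> {} \<and> s \<subseteq> {1..n}) \<and>
     (\<forall>s\<in>X. \<forall>t. t \<subseteq> s \<and> t \<noteq> {} \<longrightarrow> t \<in> X)"

definition simplices :: "nat set set \<Rightarrow> nat \<Rightarrow> nat set set" where
  "simplices X k = {s\<in>X. card s = k + 1}"

definition Xplus :: "nat set set \<Rightarrow> nat \<Rightarrow> osimplex set" where
  "Xplus X k = {(s, True) | s. s \<in> simplices X k}"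

definition Xminus :: "nat set set \<Rightarrow> nat \<Rightarrow> osimplex set" where
  "Xminus X k = {(s, False) | s. s \<in> simplices X k}"

definition Xpm :: "nat set set \<Rightarrow> nat \<Rightarrow> osimplex set" where
  "Xpm X k = Xplus X k \<union> Xminus X k"

definition opp :: "osimplex \<Rightarrow> osimplex" where
  "opp \<sigma> = (fst \<sigma>, \<not> snd \<sigma>)"

text \<open>Orientation induced by (s,b) on the face missing v: removing v_j from
the increasing ordering [v_0,...,v_k] gives (-1)^j times the increasing
ordering of the face, where j = #{x in s. x < v}.\<close>
definition face_orient :: "osimplex \<Rightarrow> nat \<Rightarrow> osimplex" where
  "face_orient \<sigma> v = (fst \<sigma> - {v}, snd \<sigma> = even (card {x\<in>fst \<sigma>. x < v}))"

text \<open>Orientation induced by (s,b) on the coface s+{u}: the ordering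
[u, v_0, ..., v_k] differs from increasing order by #{x in s. x < u}
transpositions.\<close>
definition coface_orient :: "osimplex \<Rightarrow> nat \<Rightarrow> osimplex" where
  "coface_orient \<sigma> u = (insert u (fst \<sigma>), snd \<sigma> = even (card {x\<in>fst \<sigma>. x < u}))"

definition vdiff :: "osimplex \<Rightarrow> osimplex \<Rightarrow> nat" where
  "vdiff \<sigma> \<sigma>' = the_elem (fst \<sigma> - fst \<sigma>')"

definition down_adj :: "osimplex \<Rightarrow> osimplex \<Rightarrow> bool" where
  "down_adj \<sigma> \<sigma>' \<longleftrightarrow> fst \<sigma> \<noteq> fst \<sigma>' \<and> card (fst \<sigma>) = card (fst \<sigma>') \<and>
     card (fst \<sigma> \<inter> fst \<sigma>') + 1 = card (fst \<sigma>) \<and>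
     face_orient \<sigma> (vdiff \<sigma> \<sigma>') = face_orient \<sigma>' (vdiff \<sigma>' \<sigma>)"

definition up_adj :: "nat set set \<Rightarrow> osimplex \<Rightarrow> osimplex \<Rightarrow> bool" where
  "up_adj X \<sigma> \<sigma>' \<longleftrightarrow> fst \<sigma> \<noteq> fst \<sigma>' \<and> card (fst \<sigma>) = card (fst \<sigma>') \<and>
     fst \<sigma> \<union> fst \<sigma>' \<in> X \<and> card (fst \<sigma> \<union> fst \<sigma>') = card (fst \<sigma>) + 1 \<and>
     coface_orient \<sigma> (vdiff \<sigma>' \<sigma>) = coface_orient \<sigma>' (vdiff \<sigma> \<sigma>')"

definition up_set :: "nat set set \<Rightarrow> nat \<Rightarrow> osimplex \<Rightarrow> nat set" where
  "up_set X k \<sigma> = {u. u \<notin> fst \<sigma> \<and> insert u (fst \<sigma>) \<in> simplices X (k + 1)}"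

definition diag_weight :: "nat set set \<Rightarrow> (nat \<Rightarrow> real) \<Rightarrow> nat \<Rightarrow> osimplex \<Rightarrow> real" where
  "diag_weight X w k \<sigma> = (\<Sum>u\<in>up_set X k \<sigma>. (w u)\<^sup>2) + (\<Sum>v\<in>fst \<sigma>. (w v)\<^sup>2)"

text \<open>The weighted Laplacian Delta_k, indexed by positive simplices.\<close>
definition Lap :: "nat set set \<Rightarrow> (nat \<Rightarrow> real) \<Rightarrow> nat \<Rightarrow> osimplex \<Rightarrow> osimplex \<Rightarrow> real" where
  "Lap X w k \<sigma> \<sigma>' =
     (if \<sigma> = \<sigma>' then diag_weight X w k \<sigma>
      else if down_adj \<sigma> \<sigma>' \<and> \<not> up_adj X \<sigma> (opp \<sigma>')
        then w (vdiff \<sigma> \<sigma>') * w (vdiff \<sigma>' \<sigma>)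
      else if down_adj \<sigma> (opp \<sigma>') \<and> \<not> up_adj X \<sigma> \<sigma>'
        then - (w (vdiff \<sigma> \<sigma>') * w (vdiff \<sigma>' \<sigma>))
      else 0)"

text \<open>x_sigma: position i (1-indexed, list index i-1) is 1 iff vertex i is in sigma.\<close>
definition xstr :: "nat \<Rightarrow> osimplex \<Rightarrow> bool list" where
  "xstr n \<sigma> = map (\<lambda>i. i \<in> fst \<sigma>) [1..<n+1]"

text \<open>Position (1-indexed) of the i-th 0, resp. the j-th 1, of a bit string.\<close>
definition zero_pos :: "bool list \<Rightarrow> nat \<Rightarrow> nat" where
  "zero_pos x i = filter (\<lambda>p. \<not> x ! (p - 1)) [1..<length x + 1] ! (i - 1)"

definition one_pos :: "bool list \<Rightarrow> nat \<Rightarrow> nat" where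
  "one_pos x j = filter (\<lambda>p. x ! (p - 1)) [1..<length x + 1] ! (j - 1)"

definition Kconst :: "nat \<Rightarrow> nat set set \<Rightarrow> (nat \<Rightarrow> real) \<Rightarrow> nat \<Rightarrow> real" where
  "Kconst n X w k = Max ((\<lambda>\<sigma>. (\<Sum>i\<in>{1..n}. (w i)\<^sup>2) +
       (\<Sum>i\<in>{1..n-k-1}. \<Sum>j\<in>{1..k+1}.
          w (zero_pos (xstr n \<sigma>) i) * w (one_pos (xstr n \<sigma>) j))) ` Xpm X k)"

definition pos_of :: "osimplex \<Rightarrow> osimplex" where
  "pos_of \<sigma> = (fst \<sigma>, True)"

definition eta :: "nat \<Rightarrow> nat set set \<Rightarrow> (nat \<Rightarrow> real) \<Rightarrow> nat \<Rightarrow> osimplex \<Rightarrow> real" where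
  "eta n X w k \<sigma> = 1 - (1 / Kconst n X w k) *
      (\<Sum>\<sigma>'\<in>Xplus X k. \<bar>Lap X w k \<sigma>' (pos_of \<sigma>)\<bar>)"

text \<open>States of S_k: Some sigma for oriented simplices, None for the absorbing state Theta.\<close>
type_synonym kstate = "osimplex option"

definition Sk :: "nat set set \<Rightarrow> nat \<Rightarrow> kstate set" where
  "Sk X k = Some ` Xpm X k \<union> {None}"

fun Pmat :: "nat \<Rightarrow> nat set set \<Rightarrow> (nat \<Rightarrow> real) \<Rightarrow> nat \<Rightarrow> kstate \<Rightarrow> kstate \<Rightarrow> real" where
  "Pmat n X w k (Some \<sigma>) (Some \<sigma>') =
     (if \<sigma> = \<sigma>' then diag_weight X w k \<sigma> / Kconst n X w k
      else if down_adj \<sigma> \<sigma>' \<and> \<not> up_adj X \<sigma> (opp \<sigma>')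
        then w (vdiff \<sigma> \<sigma>') * w (vdiff \<sigma>' \<sigma>) / Kconst n X w k
      else 0)"
| "Pmat n X w k (Some \<sigma>) None = eta n X w k \<sigma>"
| "Pmat n X w k None None = 1"
| "Pmat n X w k None (Some \<sigma>') = 0"

text \<open>Operators on N qubits are complex matrices indexed by bit strings of
length N (computational basis; False = 0, True = 1; list index i is qubit i+1).\<close>
type_synonym qop = "bool list \<Rightarrow> bool list \<Rightarrow> complex"

definition bits :: "nat \<Rightarrow> bool list set" where
  "bits N = {xs. length xs = N}"

definition mmult :: "nat \<Rightarrow> qop \<Rightarrow> qop \<Rightarrow> qop" where
  "mmult N A B = (\<lambda>x y. \<Sum>z\<in>bits N. A x z * B z y)"

definition ident :: "qop" where
  "ident = (\<lambda>x y. if x = y then 1 else 0)"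

definition adjoint :: "qop \<Rightarrow> qop" where
  "adjoint A = (\<lambda>x y. cnj (A y x))"

definition op_eq :: "nat \<Rightarrow> qop \<Rightarrow> qop \<Rightarrow> bool" where
  "op_eq N A B \<longleftrightarrow> (\<forall>x\<in>bits N. \<forall>y\<in>bits N. A x y = B x y)"

definition unitary_op :: "nat \<Rightarrow> qop \<Rightarrow> bool" where
  "unitary_op N U \<longleftrightarrow> op_eq N (mmult N (adjoint U) U) ident \<and> op_eq N (mmult N U (adjoint U)) ident"

definition proj :: "bool list set \<Rightarrow> qop" where
  "proj B = (\<lambda>x y. if x = y \<and> x \<in> B then 1 else 0)"

text \<open>(Pi tensor <0^a|) U (Pi tensor |0^a>), an operator on the m system qubits,
for U on m + a qubits (ancilla register last).\<close>
definition anc_block :: "nat \<Rightarrow> nat \<Rightarrow> bool list set \<Rightarrow> qop \<Rightarrow> qop" where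
  "anc_block m a B U = (\<lambda>x y. \<Sum>x'\<in>bits m. \<Sum>y'\<in>bits m.
      proj B x x' * U (x' @ replicate a False) (y' @ replicate a False) * proj B y' y)"

definition embed :: "'s set \<Rightarrow> ('s \<Rightarrow> bool list) \<Rightarrow> ('s \<Rightarrow> 's \<Rightarrow> complex) \<Rightarrow> qop" where
  "embed S code M = (\<lambda>x y. \<Sum>s\<in>S. \<Sum>t\<in>S.
      (if x = code s \<and> y = code t then M s t else 0))"

text \<open>Single-qubit gate G acting on qubit j+1 (list index j) of N qubits.\<close>
definition gate_on :: "nat \<Rightarrow> nat \<Rightarrow> (bool \<Rightarrow> bool \<Rightarrow> complex) \<Rightarrow> qop" where
  "gate_on N j G = (\<lambda>x y. if (\<forall>i<N. i \<noteq> j \<longrightarrow> x ! i = y ! i) then G (x ! j) (y ! j) else 0)"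

definition hadamard :: "bool \<Rightarrow> bool \<Rightarrow> complex" where
  "hadamard a b = (if a \<and> b then -1 else 1) / complex_of_real (sqrt 2)"

definition pauliZ :: "bool \<Rightarrow> bool \<Rightarrow> complex" where
  "pauliZ a b = (if a = b then (if a then -1 else 1) else 0)"

definition HZ :: "bool \<Rightarrow> bool \<Rightarrow> complex" where
  "HZ a b = (\<Sum>c\<in>UNIV. hadamard a c * pauliZ c b)"

fun ket :: "nat \<Rightarrow> kstate \<Rightarrow> bool list" where
  "ket n (Some \<sigma>) = xstr n \<sigma> @ [\<not> snd \<sigma>, False]"
| "ket n None = replicate n False @ [False, True]"

end

theory Submission
  imports Defs
begin

text \<open>For a positive simplex \<open>\<sigma>\<close> the orientation qubit of \<open>|\<sigma>\<rangle>\<close> is 0 and flipping it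
  yields \<open>|opp \<sigma>\<rangle>\<close>, so the row of \<open>HZ \<otimes> I\<close> at \<open>|\<sigma>\<rangle>\<close> is \<open>(\<langle>\<sigma>| - \<langle>opp \<sigma>|)/\<surd>2\<close> and the
  \<open>(\<sigma>, \<tau>)\<close> entry of the block of \<open>V\<^sup>h\<close> is \<open>(P \<sigma> \<tau> - P (opp \<sigma>) \<tau>)/\<surd>2\<close>. The matrix \<open>P\<close>
  keeps only the off-diagonal entries of \<open>\<Delta>\<^sub>k\<close> with sign \<open>+\<close>; reversing the orientation of
  \<open>\<sigma>\<close> exchanges the two off-diagonal cases of \<open>\<Delta>\<^sub>k\<close>, so the entries with sign \<open>-\<close> are
  exactly the entries \<open>P (opp \<sigma>) \<tau>\<close>. Hence \<open>P \<sigma> \<tau> - P (opp \<sigma>) \<tau> = (\<Delta>\<^sub>k)\<^sub>\<sigma>\<^sub>\<tau> / K\<close>.\<close>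

lemma finite_bits [simp]: "finite (bits N)"
  using finite_lists_length_eq[of "UNIV :: bool set" N] by (simp add: bits_def)

lemma sum_proj_left:
  assumes "x \<in> bits m"
  shows "(\<Sum>z\<in>bits m. proj B x z * f z) = (if x \<in> B then f x else 0)"
  using assms by (simp add: proj_def if_distrib[of "\<lambda>c. c * _"] sum.delta cong: if_cong)

lemma sum_proj_right:
  assumes "y \<in> bits m"
  shows "(\<Sum>z\<in>bits m. f z * proj B z y) = (if y \<in> B then f y else 0)"
proof -
  have "proj B z y = proj B y z" for z by (auto simp: proj_def)
  then show ?thesis using sum_proj_left[OF assms, of B f] by (simp add: mult.commute)
qed

lemma anc_block_apply:
  assumes "x \<in> bits m" "y \<in> bits m"
  shows "anc_block m a B U x y =
    (if x \<in> B \<and> y \<in> B then U (x @ replicate a False) (y @ replicate a False) else 0)"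
  using assms unfolding anc_block_def mult.assoc sum_distrib_left[symmetric]
  by (simp add: sum_proj_left sum_proj_right)

lemma mmult_proj_left:
  assumes "x \<in> bits N"
  shows "mmult N (proj B) A x y = (if x \<in> B then A x y else 0)"
  using assms by (simp add: mmult_def sum_proj_left)

lemma mmult_proj_right:
  assumes "y \<in> bits N"
  shows "mmult N A (proj B) x y = (if y \<in> B then A x y else 0)"
  using assms by (simp add: mmult_def sum_proj_right)

lemma block_encoding_apply:
  assumes "op_eq m (anc_block m a B U) (mmult m (mmult m (proj B) M) (proj B))"
    and "B \<subseteq> bits m" "x \<in> B" "y \<in> B"
  shows "U (x @ replicate a False) (y @ replicate a False) = M x y"
proof -
  have "x \<in> bits m" "y \<in> bits m" using assms(2-4) by auto
  with assms show ?thesis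
    unfolding op_eq_def by (force simp: anc_block_apply mmult_proj_left mmult_proj_right)
qed

lemma embed_apply:
  assumes "inj_on code S" "finite S" "s \<in> S" "t \<in> S"
  shows "embed S code M (code s) (code t) = M s t"
proof -
  have "embed S code M (code s) (code t) =
      (\<Sum>s'\<in>S. if s' = s then \<Sum>t'\<in>S. if t' = t then M s' t' else 0 else 0)"
    unfolding embed_def using assms(1,3,4)
    by (intro sum.cong refl) (auto simp: inj_on_eq_iff intro!: sum.cong)
  then show ?thesis using assms(2-4) by simp
qed

lemma embed_outside:
  assumes "x \<notin> code ` S \<or> y \<notin> code ` S"
  shows "embed S code M x y = 0"
  using assms unfolding embed_def by (intro sum.neutral) (auto intro!: sum.neutral)

lemma op_eq_embedI:
  assumes "inj_on code S" "finite S"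
    and "\<And>x y. x \<in> bits m \<Longrightarrow> y \<in> bits m \<Longrightarrow> x \<notin> code ` S \<or> y \<notin> code ` S \<Longrightarrow> A x y = 0"
    and "\<And>s t. s \<in> S \<Longrightarrow> t \<in> S \<Longrightarrow> A (code s) (code t) = M s t"
  shows "op_eq m A (embed S code M)"
  unfolding op_eq_def
proof (intro ballI)
  fix x y assume "x \<in> bits m" "y \<in> bits m"
  show "A x y = embed S code M x y"
  proof (cases "x \<in> code ` S \<and> y \<in> code ` S")
    case True
    then show ?thesis using assms(1,2,4) by (auto simp: embed_apply)
  next
    case False
    then show ?thesis
      using assms(3) \<open>x \<in> bits m\<close> \<open>y \<in> bits m\<close> by (auto simp: embed_outside)
  qed
qed

lemma agree_except_at_iff:
  assumes "x \<in> bits N" "z \<in> bits N" "j < N"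
  shows "(\<forall>i<N. i \<noteq> j \<longrightarrow> x ! i = z ! i) \<longleftrightarrow> z = x \<or> z = x[j := \<not> x ! j]"
proof
  assume same: "\<forall>i<N. i \<noteq> j \<longrightarrow> x ! i = z ! i"
  have len: "length x = N" "length z = N" using assms by (auto simp: bits_def)
  show "z = x \<or> z = x[j := \<not> x ! j]"
  proof (cases "z ! j = x ! j")
    case True
    then have "z ! i = x ! i" if "i < N" for i using same that by (cases "i = j") auto
    then have "z = x" using len by (intro nth_equalityI) auto
    then show ?thesis ..
  next
    case False
    then have "z = x[j := \<not> x ! j]" using same len assms(3)
      by (intro nth_equalityI) (auto simp: nth_list_update)
    then show ?thesis ..
  qed
qed (auto simp: nth_list_update)

lemma mmult_gate_on_apply:
  assumes "x \<in> bits N" "j < N"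
  shows "mmult N (gate_on N j G) U x y =
     G (x ! j) (x ! j) * U x y + G (x ! j) (\<not> x ! j) * U (x[j := \<not> x ! j]) y"
proof -
  let ?x' = "x[j := \<not> x ! j]"
  have len: "length x = N" using assms by (simp add: bits_def)
  have "?x' \<noteq> x" using assms len by (metis nth_list_update_eq)
  have "bits N \<inter> {x, ?x'} = {x, ?x'}" using assms len by (auto simp: bits_def)
  have "mmult N (gate_on N j G) U x y =
      (\<Sum>z\<in>bits N. if z \<in> {x, ?x'} then gate_on N j G x z * U z y else 0)"
    unfolding mmult_def
    by (intro sum.cong refl)
      (auto simp: gate_on_def agree_except_at_iff[OF assms(1) _ assms(2)])
  also have "\<dots> = (\<Sum>z\<in>{x, ?x'}. gate_on N j G x z * U z y)"
    using sum.inter_restrict[OF finite_bits, of "\<lambda>z. gate_on N j G x z * U z y" N "{x, ?x'}"]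
      \<open>bits N \<inter> {x, ?x'} = {x, ?x'}\<close> by simp
  also have "\<dots> = gate_on N j G x x * U x y + gate_on N j G x ?x' * U ?x' y"
    using \<open>?x' \<noteq> x\<close> by simp
  finally show ?thesis
    using assms len by (simp add: gate_on_def nth_list_update)
qed

lemma HZ_row_False:
  "HZ False False * a + HZ False True * b = (a - b) / complex_of_real (sqrt 2)"
  by (simp add: HZ_def hadamard_def pauliZ_def UNIV_bool diff_divide_distrib)

lemma fst_opp [simp]: "fst (opp \<sigma>) = fst \<sigma>"
  by (simp add: opp_def)

lemma opp_opp [simp]: "opp (opp \<sigma>) = \<sigma>"
  by (simp add: opp_def)

lemma opp_neq [simp]: "opp \<sigma> \<noteq> \<sigma>" "\<sigma> \<noteq> opp \<sigma>"
  by (auto simp: opp_def prod_eq_iff)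

lemma opp_eq_iff: "opp \<sigma> = \<tau> \<longleftrightarrow> \<sigma> = opp \<tau>"
  by auto

lemma vdiff_opp [simp]: "vdiff (opp \<sigma>) \<tau> = vdiff \<sigma> \<tau>" "vdiff \<sigma> (opp \<tau>) = vdiff \<sigma> \<tau>"
  by (simp_all add: vdiff_def)

lemma face_orient_opp: "face_orient (opp \<sigma>) v = opp (face_orient \<sigma> v)"
  by (auto simp: face_orient_def opp_def)

lemma coface_orient_opp: "coface_orient (opp \<sigma>) v = opp (coface_orient \<sigma> v)"
  by (auto simp: coface_orient_def opp_def)

lemma down_adj_opp: "down_adj (opp \<sigma>) \<tau> \<longleftrightarrow> down_adj \<sigma> (opp \<tau>)"
  unfolding down_adj_def by (simp add: face_orient_opp opp_eq_iff)

lemma up_adj_opp: "up_adj X (opp \<sigma>) (opp \<tau>) \<longleftrightarrow> up_adj X \<sigma> \<tau>"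
  unfolding up_adj_def by (simp add: coface_orient_opp opp_eq_iff)

lemma not_down_adj_both: "\<not> (down_adj \<sigma> \<tau> \<and> down_adj \<sigma> (opp \<tau>))"
  unfolding down_adj_def by (simp add: face_orient_opp)

lemma Pmat_diff_opp_eq_Lap:
  assumes "snd \<sigma>" "snd \<tau>"
  shows "Pmat n X w k (Some \<sigma>) (Some \<tau>) - Pmat n X w k (Some (opp \<sigma>)) (Some \<tau>)
     = Lap X w k \<sigma> \<tau> / Kconst n X w k"
proof (cases "\<sigma> = \<tau>")
  case True
  then show ?thesis by (simp add: Lap_def down_adj_def)
next
  case False
  have "opp \<sigma> \<noteq> \<tau>" using assms by (auto simp: opp_def)
  then show ?thesis using False not_down_adj_both[of \<sigma> \<tau>]
    by (auto simp: Lap_def down_adj_opp up_adj_opp opp_eq_iff diff_divide_distrib)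
qed

lemma Xpm_iff: "\<sigma> \<in> Xpm X k \<longleftrightarrow> fst \<sigma> \<in> simplices X k"
  by (cases \<sigma>) (auto simp: Xpm_def Xplus_def Xminus_def)

lemma Xplus_iff: "\<sigma> \<in> Xplus X k \<longleftrightarrow> fst \<sigma> \<in> simplices X k \<and> snd \<sigma>"
  by (cases \<sigma>) (auto simp: Xplus_def)

lemma Xplus_subset_Xpm: "Xplus X k \<subseteq> Xpm X k"
  by (auto simp: Xpm_def)

lemma simplex_subset_vertices:
  assumes "is_complex n X" "s \<in> simplices X k"
  shows "s \<subseteq> {1..n}"
  using assms by (simp add: is_complex_def simplices_def)

lemma finite_Xpm:
  assumes "is_complex n X"
  shows "finite (Xpm X k)"
proof -
  have "simplices X k \<subseteq> Pow {1..n}"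
    using simplex_subset_vertices[OF assms] by blast
  then have "finite (simplices X k)" by (rule finite_subset) simp
  then have "finite (simplices X k \<times> (UNIV :: bool set))" by simp
  moreover have "Xpm X k \<subseteq> simplices X k \<times> UNIV" by (auto simp: Xpm_iff)
  ultimately show ?thesis by (simp add: finite_subset)
qed

lemma xstr_inj:
  assumes "xstr n \<sigma> = xstr n \<tau>" "fst \<sigma> \<subseteq> {1..n}" "fst \<tau> \<subseteq> {1..n}"
  shows "fst \<sigma> = fst \<tau>"
proof -
  have "i \<in> fst \<sigma> \<longleftrightarrow> i \<in> fst \<tau>" if "i \<in> {1..n}" for i
    using assms(1) that unfolding xstr_def map_eq_conv set_upt by auto
  then show ?thesis using assms(2,3) by blast
qed

lemma length_ket [simp]: "length (ket n s) = n + 2"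
  by (cases s) (simp_all add: xstr_def)

lemma ket_in_bits [simp]: "ket n s \<in> bits (n + 2)"
  by (simp add: bits_def)

declare ket.simps [simp del]

lemma inj_on_ket:
  assumes "is_complex n X"
  shows "inj_on (ket n) (Sk X k)"
proof (rule inj_onI)
  fix s t assume "s \<in> Sk X k" "t \<in> Sk X k" and ket_eq: "ket n s = ket n t"
  then show "s = t"
  proof (cases s; cases t)
    fix \<sigma> \<tau> assume "s = Some \<sigma>" "t = Some \<tau>" "s \<in> Sk X k" "t \<in> Sk X k"
    then have "fst \<sigma> \<in> simplices X k" "fst \<tau> \<in> simplices X k" by (auto simp: Sk_def Xpm_iff)
    then have vertices: "fst \<sigma> \<subseteq> {1..n}" "fst \<tau> \<subseteq> {1..n}"
      using simplex_subset_vertices[OF assms] by blast+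
    have xstr_eq: "xstr n \<sigma> = xstr n \<tau>" and snd_eq: "snd \<sigma> = snd \<tau>"
      using ket_eq \<open>s = Some \<sigma>\<close> \<open>t = Some \<tau>\<close> by (simp_all add: ket.simps)
    have "fst \<sigma> = fst \<tau>" using xstr_eq vertices by (rule xstr_inj)
    with snd_eq show "s = t"
      using \<open>s = Some \<sigma>\<close> \<open>t = Some \<tau>\<close> by (simp add: prod_eq_iff)
  qed (use ket_eq in \<open>auto simp: ket.simps\<close>)
qed

lemma inj_on_ket_Some:
  assumes "is_complex n X"
  shows "inj_on (\<lambda>\<sigma>. ket n (Some \<sigma>)) (Xplus X k)"
proof -
  have "inj_on (ket n) (Some ` Xplus X k)"
    using Xplus_subset_Xpm by (intro inj_on_subset[OF inj_on_ket[OF assms]]) (auto simp: Sk_def)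
  then show ?thesis by (simp add: inj_on_def)
qed

lemma ket_orientation_bit:
  assumes "snd \<sigma>"
  shows "(ket n (Some \<sigma>) @ zs) ! n = False"
    and "(ket n (Some \<sigma>) @ zs)[n := True] = ket n (Some (opp \<sigma>)) @ zs"
  using assms by (simp_all add: ket.simps opp_def list_update_append nth_append xstr_def)

lemma Pmat_block_entry:
  assumes "is_complex n X"
    and enc: "op_eq (n + 2)
        (anc_block (n + 2) \<alpha> (ket n ` Some ` Xpm X k) U)
        (mmult (n + 2) (mmult (n + 2) (proj (ket n ` Some ` Xpm X k))
             (embed (Sk X k) (ket n) (\<lambda>s t. complex_of_real (Pmat n X w k s t))))
           (proj (ket n ` Some ` Xpm X k)))"
    and "\<sigma> \<in> Xpm X k" "\<tau> \<in> Xpm X k"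
  shows "U (ket n (Some \<sigma>) @ replicate \<alpha> False) (ket n (Some \<tau>) @ replicate \<alpha> False)
       = complex_of_real (Pmat n X w k (Some \<sigma>) (Some \<tau>))"
proof -
  have "ket n ` Some ` Xpm X k \<subseteq> bits (n + 2)" by (blast intro: ket_in_bits)
  then have "U (ket n (Some \<sigma>) @ replicate \<alpha> False) (ket n (Some \<tau>) @ replicate \<alpha> False)
      = embed (Sk X k) (ket n) (\<lambda>s t. complex_of_real (Pmat n X w k s t))
          (ket n (Some \<sigma>)) (ket n (Some \<tau>))"
    using assms(3,4) by (intro block_encoding_apply[OF enc]) auto
  also have "\<dots> = complex_of_real (Pmat n X w k (Some \<sigma>) (Some \<tau>))"
    using assms(1,3,4) by (intro embed_apply inj_on_ket) (auto simp: Sk_def finite_Xpm)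
  finally show ?thesis .
qed

theorem proposition3p9:
  fixes n k \<alpha> :: nat and w :: "nat \<Rightarrow> real" and X :: "nat set set"
    and U :: qop
  assumes cplx: "is_complex n X"
    and wpos: "\<forall>v\<in>{1..n}. w v > 0"
    and unit: "unitary_op (n + 2 + \<alpha>) U"
    and enc: "op_eq (n + 2)
        (anc_block (n + 2) \<alpha> (ket n ` Some ` Xpm X k) U)
        (mmult (n + 2) (mmult (n + 2) (proj (ket n ` Some ` Xpm X k))
             (embed (Sk X k) (ket n) (\<lambda>s t. complex_of_real (Pmat n X w k s t))))
           (proj (ket n ` Some ` Xpm X k)))"
  shows "op_eq (n + 2)
     (anc_block (n + 2) \<alpha> (ket n ` Some ` Xplus X k)
        (mmult (n + 2 + \<alpha>) (gate_on (n + 2 + \<alpha>) n HZ) U))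
     (embed (Xplus X k) (\<lambda>\<sigma>. ket n (Some \<sigma>))
        (\<lambda>\<sigma> \<sigma>'. complex_of_real (Lap X w k \<sigma> \<sigma>' / (Kconst n X w k * sqrt 2))))"
proof (rule op_eq_embedI[OF inj_on_ket_Some[OF cplx]
      finite_subset[OF Xplus_subset_Xpm finite_Xpm[OF cplx]]])
  fix \<sigma> \<tau> assume "\<sigma> \<in> Xplus X k" "\<tau> \<in> Xplus X k"
  then have pos: "snd \<sigma>" "snd \<tau>" and in_Xpm: "\<sigma> \<in> Xpm X k" "opp \<sigma> \<in> Xpm X k" "\<tau> \<in> Xpm X k"
    by (auto simp: Xplus_iff Xpm_iff)
  let ?ket0 = "\<lambda>\<sigma>. ket n (Some \<sigma>) @ replicate \<alpha> False"
  have "?ket0 \<sigma> \<in> bits (n + 2 + \<alpha>)" by (simp add: bits_def)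
  then have "mmult (n + 2 + \<alpha>) (gate_on (n + 2 + \<alpha>) n HZ) U (?ket0 \<sigma>) (?ket0 \<tau>)
      = HZ False False * U (?ket0 \<sigma>) (?ket0 \<tau>) + HZ False True * U (?ket0 (opp \<sigma>)) (?ket0 \<tau>)"
    by (simp only: mmult_gate_on_apply ket_orientation_bit[OF pos(1)] not_False_eq_True)
  also have "\<dots> = (U (?ket0 \<sigma>) (?ket0 \<tau>) - U (?ket0 (opp \<sigma>)) (?ket0 \<tau>)) / complex_of_real (sqrt 2)"
    by (rule HZ_row_False)
  also have "\<dots> = complex_of_real (Lap X w k \<sigma> \<tau> / (Kconst n X w k * sqrt 2))"
    using Pmat_diff_opp_eq_Lap[OF pos, of n X w k]
    by (simp add: Pmat_block_entry[OF cplx enc] in_Xpm flip: of_real_diff of_real_divide)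
  finally show "anc_block (n + 2) \<alpha> (ket n ` Some ` Xplus X k)
      (mmult (n + 2 + \<alpha>) (gate_on (n + 2 + \<alpha>) n HZ) U) (ket n (Some \<sigma>)) (ket n (Some \<tau>))
    = complex_of_real (Lap X w k \<sigma> \<tau> / (Kconst n X w k * sqrt 2))"
    using \<open>\<sigma> \<in> Xplus X k\<close> \<open>\<tau> \<in> Xplus X k\<close>
    by (subst anc_block_apply[OF ket_in_bits ket_in_bits]) auto
qed (auto simp: anc_block_apply image_image)

end
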